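(* For each $\psi\in(-\pi,\pi]$ and each $\tau>0$, $$\{(a,w)\in D_c : \operatorname{Arg}(w)=\psi,\ \tau_c(a,w)>\tau\} = \bigcup_{s>1}\frac{1}{s}\Gamma_c(\psi;\tau),$$ and consequently $$\{(a,w)\in D_c : \tau_c(a,w)>\tau\} = \bigcup_{\psi\in(-\pi,\pi]}\bigcup_{s>1}\frac{1}{s}\Gamma_c(\psi;\tau).$$
   Context: $\operatorname{Arg}(w)\in(-\pi,\pi]$ is the principal argument; $\arccos:[-1,1]\to[0,\pi]$. $D_c := \{(a,w)\in\mathbb{R}\times(\mathbb{C}\setminus\{0\}):\operatorname{Re}(w)<a<|w|\}$; $\tau_c(a,w) := \frac{1}{\sqrt{|w|^2-a^2}}[|\operatorname{Arg}(w)|-\arccos(a/|w|)]$. $a(\Omega,\psi;\tau) := -\Omega\cot(\tau\Omega-\psi)$, $\rho(\Omega,\psi;\tau) := -\Omega/\sin(\tau\Omega-\psi)$. $I_c(\psi) := (0,\psi)$ if $\psi\ge0$ and $(\psi,0)$ if $\psi\le0$. $\Gamma_c(\psi;\tau) := \{(a(\Omega,\psi;\tau),\,\rho(\Omega,\psi;\tau)e^{i\psi}) : \tau\Omega\in I_c(\psi)\}$, and $\frac1s\Gamma := \{(a/s,w/s):(a,w)\in\Gamma\}$. *)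

theory Defs
  imports "HOL-Analysis.Analysis"
begin

definition D_c :: "(real \<times> complex) set" where
  "D_c = {(a, w). w \<noteq> 0 \<and> Re w < a \<and> a < cmod w}"

definition tau_c :: "real \<Rightarrow> complex \<Rightarrow> real" where
  "tau_c a w = (1 / sqrt ((cmod w)\<^sup>2 - a\<^sup>2)) * (\<bar>Arg w\<bar> - arccos (a / cmod w))"

definition a_fun :: "real \<Rightarrow> real \<Rightarrow> real \<Rightarrow> real" where
  "a_fun \<Omega> \<psi> \<tau> = - \<Omega> * cot (\<tau> * \<Omega> - \<psi>)"

definition rho_fun :: "real \<Rightarrow> real \<Rightarrow> real \<Rightarrow> real" where
  "rho_fun \<Omega> \<psi> \<tau> = - \<Omega> / sin (\<tau> * \<Omega> - \<psi>)"

definition I_c :: "real \<Rightarrow> real set" where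
  "I_c \<psi> = (if \<psi> \<ge> 0 then {0<..<\<psi>} else {\<psi><..<0})"

definition Gamma_c :: "real \<Rightarrow> real \<Rightarrow> (real \<times> complex) set" where
  "Gamma_c \<psi> \<tau> = {(a_fun \<Omega> \<psi> \<tau>, complex_of_real (rho_fun \<Omega> \<psi> \<tau>) * cis \<psi>) | \<Omega>. \<tau> * \<Omega> \<in> I_c \<psi>}"

definition scale_set :: "real \<Rightarrow> (real \<times> complex) set \<Rightarrow> (real \<times> complex) set" where
  "scale_set s \<Gamma> = {(a / s, w / complex_of_real s) | a w. (a, w) \<in> \<Gamma>}"

end

theory Submission
  imports Defs
begin

text \<open>In polar form \<open>a = r cos \<theta>\<close>, \<open>w = r cis \<psi>\<close> with \<open>0 < \<theta> < \<bar>\<psi>\<bar>\<close>, the slice of \<open>D\<^sub>c\<close> with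
  \<open>Arg w = \<psi>\<close> is exactly the set of such points, and \<open>\<tau>\<^sub>c = (\<bar>\<psi>\<bar> - \<theta>) / (r sin \<theta>)\<close>.
  The curve \<open>\<Gamma>\<^sub>c(\<psi>;\<tau>)\<close> is the level set \<open>\<tau>\<^sub>c = \<tau>\<close> of this slice, and \<open>\<tau>\<^sub>c\<close> is homogeneous
  of degree \<open>-1\<close> under positive scaling, which preserves \<open>D\<^sub>c\<close> and \<open>Arg\<close>. Hence a point has
  \<open>\<tau>\<^sub>c > \<tau>\<close> iff scaling it up by \<open>s = \<tau>\<^sub>c / \<tau> > 1\<close> lands on \<open>\<Gamma>\<^sub>c(\<psi>;\<tau>)\<close>.\<close>

lemma polar_point_in_D_c:
  fixes r \<theta> \<psi> :: real
  assumes r: "r > 0" and th: "0 < \<theta>" "\<theta> < \<bar>\<psi>\<bar>" and ps: "-pi < \<psi>" "\<psi> \<le> pi"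
  shows "(r * cos \<theta>, complex_of_real r * cis \<psi>) \<in> D_c"
    and "Arg (complex_of_real r * cis \<psi>) = \<psi>"
    and "tau_c (r * cos \<theta>) (complex_of_real r * cis \<psi>) = (\<bar>\<psi>\<bar> - \<theta>) / (r * sin \<theta>)"
proof -
  have abs_psi: "\<bar>\<psi>\<bar> \<le> pi" using ps by auto
  have "sin \<theta> > 0" using th abs_psi by (intro sin_gt_zero) auto
  have norm_eq: "cmod (complex_of_real r * cis \<psi>) = r" using r by (simp add: norm_mult)
  have "cos \<psi> < cos \<theta>"
    using th abs_psi cos_monotone_0_pi[of \<theta> "\<bar>\<psi>\<bar>"] by (simp add: abs_if split: if_splits)
  moreover have "cos \<theta> < 1" using th abs_psi cos_monotone_0_pi[of 0 \<theta>] by simp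
  ultimately have "r * cos \<psi> < r * cos \<theta>" "r * cos \<theta> < r"
    using r by simp_all
  then show "(r * cos \<theta>, complex_of_real r * cis \<psi>) \<in> D_c"
    unfolding D_c_def using r norm_eq by simp
  show Arg_eq: "Arg (complex_of_real r * cis \<psi>) = \<psi>" using r ps by (simp add: Arg_cis)
  have "arccos (r * cos \<theta> / r) = \<theta>" using r th abs_psi by (simp add: arccos_cos)
  moreover have "sqrt (r\<^sup>2 - (r * cos \<theta>)\<^sup>2) = r * sin \<theta>"
  proof -
    have "r\<^sup>2 - (r * cos \<theta>)\<^sup>2 = (r * sin \<theta>)\<^sup>2"
      by (simp add: power_mult_distrib sin_squared_eq right_diff_distrib)
    then show ?thesis using r \<open>sin \<theta> > 0\<close> by simp
  qed
  ultimately show "tau_c (r * cos \<theta>) (complex_of_real r * cis \<psi>) = (\<bar>\<psi>\<bar> - \<theta>) / (r * sin \<theta>)"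
    unfolding tau_c_def norm_eq Arg_eq by simp
qed

lemma D_c_polar_coordinates:
  assumes "(a, w) \<in> D_c"
  obtains r \<theta> where "r > 0" "0 < \<theta>" "\<theta> < \<bar>Arg w\<bar>"
    "a = r * cos \<theta>" "w = complex_of_real r * cis (Arg w)"
proof
  have "w \<noteq> 0" and lo: "Re w < a" and hi: "a < cmod w" using assms by (auto simp: D_c_def)
  then show r: "cmod w > 0" by simp
  show w_eq: "w = complex_of_real (cmod w) * cis (Arg w)"
    using rcis_cmod_Arg[of w] by (simp add: rcis_def)
  have "Re w = cmod w * cos \<bar>Arg w\<bar>" by (subst w_eq) (simp add: abs_if)
  then have lo': "cos \<bar>Arg w\<bar> < a / cmod w" using lo r by (simp add: field_simps)
  have hi': "a / cmod w < 1" using hi r by (simp add: field_simps)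
  have ge: "-1 \<le> a / cmod w" using lo' cos_ge_minus_one[of "\<bar>Arg w\<bar>"] by linarith
  have "\<bar>Arg w\<bar> \<le> pi" using mpi_less_Arg[of w] Arg_le_pi[of w] by auto
  have "arccos (a / cmod w) < arccos (cos \<bar>Arg w\<bar>)"
    using lo' hi' by (intro arccos_less_arccos) auto
  also have "\<dots> = \<bar>Arg w\<bar>" using \<open>\<bar>Arg w\<bar> \<le> pi\<close> by (intro arccos_cos) auto
  finally show "arccos (a / cmod w) < \<bar>Arg w\<bar>" .
  have "arccos 1 < arccos (a / cmod w)" using ge hi' by (intro arccos_less_arccos) auto
  then show "0 < arccos (a / cmod w)" by simp
  have "cos (arccos (a / cmod w)) = a / cmod w" using ge hi' by (intro cos_arccos) auto
  then show "a = cmod w * cos (arccos (a / cmod w))" using r by simp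
qed

lemma a_fun_rho_fun_on_I_c:
  assumes "\<tau> > 0" "\<tau> * \<Omega> \<in> I_c \<psi>"
  defines "\<theta> \<equiv> \<bar>\<psi>\<bar> - \<tau> * \<bar>\<Omega>\<bar>"
  shows "0 < \<theta>" "\<theta> < \<bar>\<psi>\<bar>" "\<bar>\<Omega>\<bar> > 0"
    "a_fun \<Omega> \<psi> \<tau> = \<bar>\<Omega>\<bar> * cos \<theta> / sin \<theta>" "rho_fun \<Omega> \<psi> \<tau> = \<bar>\<Omega>\<bar> / sin \<theta>"
proof -
  consider "0 < \<tau> * \<Omega>" "\<tau> * \<Omega> < \<psi>" | "\<psi> < \<tau> * \<Omega>" "\<tau> * \<Omega> < 0"
    using assms(2) by (auto simp: I_c_def split: if_splits)
  then have "0 < \<theta> \<and> \<theta> < \<bar>\<psi>\<bar> \<and> \<bar>\<Omega>\<bar> > 0 \<and>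
    a_fun \<Omega> \<psi> \<tau> = \<bar>\<Omega>\<bar> * cos \<theta> / sin \<theta> \<and> rho_fun \<Omega> \<psi> \<tau> = \<bar>\<Omega>\<bar> / sin \<theta>"
  proof cases
    case 1
    then have "\<Omega> > 0" using assms(1) by (simp add: zero_less_mult_iff)
    then have \<theta>: "\<theta> = \<psi> - \<tau> * \<Omega>" "\<bar>\<Omega>\<bar> = \<Omega>" using 1 by (simp_all add: \<theta>_def)
    have arg: "\<tau> * \<Omega> - \<psi> = - \<theta>" using \<theta> by simp
    show ?thesis unfolding a_fun_def rho_fun_def arg cot_def sin_minus cos_minus \<theta>(2)
      using 1 \<open>\<Omega> > 0\<close> by (simp add: \<theta>(1))
  next
    case 2
    then have "\<Omega> < 0" using assms(1) by (simp add: mult_less_0_iff)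
    then have \<theta>: "\<theta> = \<tau> * \<Omega> - \<psi>" "\<bar>\<Omega>\<bar> = - \<Omega>" using 2 by (simp_all add: \<theta>_def)
    show ?thesis unfolding a_fun_def rho_fun_def cot_def \<theta>(2) \<theta>(1)[symmetric]
      using 2 \<open>\<Omega> < 0\<close> by (simp add: \<theta>(1))
  qed
  then show "0 < \<theta>" "\<theta> < \<bar>\<psi>\<bar>" "\<bar>\<Omega>\<bar> > 0"
    "a_fun \<Omega> \<psi> \<tau> = \<bar>\<Omega>\<bar> * cos \<theta> / sin \<theta>" "rho_fun \<Omega> \<psi> \<tau> = \<bar>\<Omega>\<bar> / sin \<theta>" by auto
qed

lemma Gamma_c_polar:
  assumes "\<tau> > 0" "-pi < \<psi>" "\<psi> \<le> pi"
  shows "Gamma_c \<psi> \<tau> = {(r * cos \<theta>, complex_of_real r * cis \<psi>) | r \<theta>.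
           0 < \<theta> \<and> \<theta> < \<bar>\<psi>\<bar> \<and> r * sin \<theta> = (\<bar>\<psi>\<bar> - \<theta>) / \<tau>}"
    (is "_ = ?P")
proof (intro equalityI subsetI)
  fix p assume "p \<in> Gamma_c \<psi> \<tau>"
  then obtain \<Omega> where I: "\<tau> * \<Omega> \<in> I_c \<psi>"
    and p: "p = (a_fun \<Omega> \<psi> \<tau>, complex_of_real (rho_fun \<Omega> \<psi> \<tau>) * cis \<psi>)"
    unfolding Gamma_c_def by blast
  define \<theta> where "\<theta> = \<bar>\<psi>\<bar> - \<tau> * \<bar>\<Omega>\<bar>"
  note param = a_fun_rho_fun_on_I_c[OF assms(1) I, folded \<theta>_def]
  have "sin \<theta> > 0" using param(1,2) assms(2,3) by (intro sin_gt_zero) auto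
  then have "a_fun \<Omega> \<psi> \<tau> = \<bar>\<Omega>\<bar> / sin \<theta> * cos \<theta>" "\<bar>\<Omega>\<bar> / sin \<theta> * sin \<theta> = (\<bar>\<psi>\<bar> - \<theta>) / \<tau>"
    using param(4) assms(1) by (simp_all add: \<theta>_def)
  then show "p \<in> ?P" unfolding p param(5) using param(1,2) by blast
next
  fix p assume "p \<in> ?P"
  then obtain r \<theta> where \<theta>: "0 < \<theta>" "\<theta> < \<bar>\<psi>\<bar>" and r: "r * sin \<theta> = (\<bar>\<psi>\<bar> - \<theta>) / \<tau>"
    and p: "p = (r * cos \<theta>, complex_of_real r * cis \<psi>)" by blast
  define \<Omega> where "\<Omega> = sgn \<psi> * (\<bar>\<psi>\<bar> - \<theta>) / \<tau>"
  have I: "\<tau> * \<Omega> \<in> I_c \<psi>"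
    using \<theta> assms(1) by (auto simp: \<Omega>_def I_c_def sgn_if)
  have abs_\<Omega>: "\<bar>\<Omega>\<bar> = r * sin \<theta>"
    using \<theta> assms(1) r by (auto simp: \<Omega>_def abs_mult sgn_if)
  have \<theta>_eq: "\<bar>\<psi>\<bar> - \<tau> * \<bar>\<Omega>\<bar> = \<theta>" using assms(1) by (simp add: abs_\<Omega> r)
  note param = a_fun_rho_fun_on_I_c[OF assms(1) I, unfolded \<theta>_eq, unfolded abs_\<Omega>]
  have "sin \<theta> > 0" using \<theta> assms(2,3) by (intro sin_gt_zero) auto
  then have "a_fun \<Omega> \<psi> \<tau> = r * cos \<theta>" "rho_fun \<Omega> \<psi> \<tau> = r"
    using param(4,5) by simp_all
  then show "p \<in> Gamma_c \<psi> \<tau>" unfolding p Gamma_c_def using I by force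
qed

lemma Gamma_c_eq_level_set:
  assumes "\<tau> > 0" "-pi < \<psi>" "\<psi> \<le> pi"
  shows "Gamma_c \<psi> \<tau> = {(a, w) \<in> D_c. Arg w = \<psi> \<and> tau_c a w = \<tau>}"
proof (intro equalityI subsetI)
  fix p assume "p \<in> Gamma_c \<psi> \<tau>"
  then obtain r \<theta> where \<theta>: "0 < \<theta>" "\<theta> < \<bar>\<psi>\<bar>" and r: "r * sin \<theta> = (\<bar>\<psi>\<bar> - \<theta>) / \<tau>"
    and p: "p = (r * cos \<theta>, complex_of_real r * cis \<psi>)"
    unfolding Gamma_c_polar[OF assms] by blast
  have "sin \<theta> > 0" using \<theta> assms(2,3) by (intro sin_gt_zero) auto
  moreover have "r * sin \<theta> > 0" using r \<theta> assms(1) by simp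
  ultimately have "r > 0" by (simp add: zero_less_mult_iff)
  note polar = polar_point_in_D_c[OF \<open>r > 0\<close> \<theta> assms(2,3)]
  have "(\<bar>\<psi>\<bar> - \<theta>) / (r * sin \<theta>) = \<tau>" using r \<theta> assms(1) by simp
  then show "p \<in> {(a, w) \<in> D_c. Arg w = \<psi> \<and> tau_c a w = \<tau>}" unfolding p using polar by simp
next
  fix p assume "p \<in> {(a, w) \<in> D_c. Arg w = \<psi> \<and> tau_c a w = \<tau>}"
  then obtain a w where p: "p = (a, w)" and "(a, w) \<in> D_c" "Arg w = \<psi>" "tau_c a w = \<tau>"
    by blast
  then obtain r \<theta> where "r > 0" and \<theta>: "0 < \<theta>" "\<theta> < \<bar>\<psi>\<bar>"
    and a: "a = r * cos \<theta>" and w: "w = complex_of_real r * cis \<psi>"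
    by (metis D_c_polar_coordinates)
  have "sin \<theta> > 0" using \<theta> assms(2,3) by (intro sin_gt_zero) auto
  have "(\<bar>\<psi>\<bar> - \<theta>) / (r * sin \<theta>) = \<tau>"
    using polar_point_in_D_c(3)[OF \<open>r > 0\<close> \<theta> assms(2,3)] \<open>tau_c a w = \<tau>\<close> a w by simp
  then have "r * sin \<theta> = (\<bar>\<psi>\<bar> - \<theta>) / \<tau>"
    using \<open>r > 0\<close> \<open>sin \<theta> > 0\<close> assms(1) by (auto simp: field_simps)
  then show "p \<in> Gamma_c \<psi> \<tau>"
    unfolding Gamma_c_polar[OF assms] p a w using \<theta> by blast
qed

lemma mem_scale_set_iff:
  assumes "s > 0"
  shows "(a, w) \<in> scale_set s A \<longleftrightarrow> (s * a, complex_of_real s * w) \<in> A"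
proof
  assume "(a, w) \<in> scale_set s A"
  then obtain b z where "(b, z) \<in> A" "a = b / s" "w = z / complex_of_real s"
    unfolding scale_set_def by blast
  then show "(s * a, complex_of_real s * w) \<in> A" using assms by simp
next
  assume "(s * a, complex_of_real s * w) \<in> A"
  moreover have "a = s * a / s" "w = complex_of_real s * w / complex_of_real s" using assms by simp_all
  ultimately show "(a, w) \<in> scale_set s A" unfolding scale_set_def by blast
qed

lemma scale_mem_D_c_iff:
  "s > 0 \<Longrightarrow> (s * a, complex_of_real s * w) \<in> D_c \<longleftrightarrow> (a, w) \<in> D_c"
  by (simp add: D_c_def norm_mult)

lemma tau_c_scale:
  assumes "s > 0"
  shows "tau_c (s * a) (complex_of_real s * w) = tau_c a w / s"
proof -
  have "sqrt ((s * cmod w)\<^sup>2 - (s * a)\<^sup>2) = s * sqrt ((cmod w)\<^sup>2 - a\<^sup>2)"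
    using assms by (simp add: power_mult_distrib real_sqrt_mult flip: right_diff_distrib)
  moreover have "s * a / (s * cmod w) = a / cmod w" using assms by simp
  ultimately show ?thesis using assms by (simp add: tau_c_def norm_mult)
qed

lemma tau_c_superlevel_slice:
  fixes \<psi> \<tau> :: real
  assumes "-pi < \<psi>" "\<psi> \<le> pi" "\<tau> > 0"
  shows "{(a, w) \<in> D_c. Arg w = \<psi> \<and> tau_c a w > \<tau>} = (\<Union>s\<in>{1<..}. scale_set s (Gamma_c \<psi> \<tau>))"
proof -
  have scale_exists: "(\<exists>s>1. t / s = \<tau>) \<longleftrightarrow> t > \<tau>" for t
  proof
    assume "\<exists>s>1. t / s = \<tau>"
    then obtain s where "s > 1" "t = s * \<tau>" by (auto simp: field_simps)
    then show "t > \<tau>" using assms(3) by simp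
  next
    assume "t > \<tau>"
    then show "\<exists>s>1. t / s = \<tau>" using assms(3) by (intro exI[of _ "t / \<tau>"]) auto
  qed
  have "(a, w) \<in> (\<Union>s\<in>{1<..}. scale_set s (Gamma_c \<psi> \<tau>)) \<longleftrightarrow>
        (a, w) \<in> D_c \<and> Arg w = \<psi> \<and> (\<exists>s>1. tau_c a w / s = \<tau>)" for a w
    by (auto simp: mem_scale_set_iff Gamma_c_eq_level_set assms scale_mem_D_c_iff tau_c_scale)
  then show ?thesis by (auto simp: scale_exists)
qed

theorem mainTheorem19:
  fixes \<psi> \<tau> :: real
  assumes "-pi < \<psi>" and "\<psi> \<le> pi" and "\<tau> > 0"
  shows "{(a, w) \<in> D_c. Arg w = \<psi> \<and> tau_c a w > \<tau>} = (\<Union>s\<in>{1<..}. scale_set s (Gamma_c \<psi> \<tau>))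
     \<and> {(a, w) \<in> D_c. tau_c a w > \<tau>} = (\<Union>\<psi>'\<in>{-pi<..pi}. \<Union>s\<in>{1<..}. scale_set s (Gamma_c \<psi>' \<tau>))"
proof
  show "{(a, w) \<in> D_c. Arg w = \<psi> \<and> tau_c a w > \<tau>} = (\<Union>s\<in>{1<..}. scale_set s (Gamma_c \<psi> \<tau>))"
    using tau_c_superlevel_slice assms by blast
  have "{(a, w) \<in> D_c. tau_c a w > \<tau>} =
        (\<Union>\<psi>'\<in>{-pi<..pi}. {(a, w) \<in> D_c. Arg w = \<psi>' \<and> tau_c a w > \<tau>})"
    using mpi_less_Arg Arg_le_pi by fastforce
  also have "\<dots> = (\<Union>\<psi>'\<in>{-pi<..pi}. \<Union>s\<in>{1<..}. scale_set s (Gamma_c \<psi>' \<tau>))"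
    using tau_c_superlevel_slice assms(3) by (intro SUP_cong) auto
  finally show "{(a, w) \<in> D_c. tau_c a w > \<tau>} =
                (\<Union>\<psi>'\<in>{-pi<..pi}. \<Union>s\<in>{1<..}. scale_set s (Gamma_c \<psi>' \<tau>))" .
qed

end
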